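(* Let $E\subseteq\mathbb{R}$ be bounded with $\overline{\dim}_M E>0$. Then there exist $n\in\mathbb{N}$ and a linear map $T\colon\mathbb{R}^n\to\mathbb{R}$ such that $Q(T(E^n))$ is dense in $\mathbb{R}$, where for $F\subseteq\mathbb{R}$, $Q(F)=\{(a-b)/(c-d): a,b,c,d\in F,\ c\neq d\}$.
   Context: For a bounded set $E\subseteq\mathbb{R}^n$ and $r>0$, let $N(E,r)$ be the number of closed balls of radius $r$ needed to cover $E$. The upper Minkowski dimension of $E$ is $\overline{\dim}_M E=\limsup_{r\downarrow 0}\log N(E,r)/\log(1/r)$, with the convention $\log 0:=-\infty$. $E^n$ denotes the $n$-fold Cartesian power of $E$. *)

theory Defs
  imports "HOL-Analysis.Analysis"
begin

definition covering_number :: "'a::metric_space set \<Rightarrow> real \<Rightarrow> nat" where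
  "covering_number E r = (LEAST k. \<exists>C. finite C \<and> card C = k \<and> E \<subseteq> (\<Union>c\<in>C. cball c r))"

definition upper_minkowski_dim :: "'a::metric_space set \<Rightarrow> ereal" where
  "upper_minkowski_dim E = Limsup (at_right (0::real))
     (\<lambda>r. if covering_number E r = 0 then -\<infinity>
          else ereal (ln (real (covering_number E r)) / ln (1 / r)))"

definition quotient_set :: "real set \<Rightarrow> real set" where
  "quotient_set F = {(a - b) / (c - d) | a b c d. a \<in> F \<and> b \<in> F \<and> c \<in> F \<and> d \<in> F \<and> c \<noteq> d}"

text \<open>Image of E^n under the linear map T x = sum_{i<n} t_i x_i (every linear map R^n -> R has this form).\<close>
definition lin_image_power :: "(nat \<Rightarrow> real) \<Rightarrow> nat \<Rightarrow> real set \<Rightarrow> real set" where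
  "lin_image_power t n E = {(\<Sum>i<n. t i * x i) | x. \<forall>i<n. x i \<in> E}"

end

theory Submission
  imports Defs
begin

text \<open>Fix 0 < s < dim E and n \<ge> 2/s.  At arbitrarily small scales r the set E contains an
  r-separated set P with more than r^(-s) points, so the grid P^n has N > r^(-2) points.
  Perturbing the coefficients t of T x = \<Sum> t_i x_i over a fine grid and averaging shows
  that some perturbation keeps three quarters of P^n separated by \<delta> r / N under T; the
  resulting configurations have N^2 pairs against a diameter-to-separation ratio of order N / r,
  so pigeonholing the pairs approximates any real number by a quotient (a - b) / (c - d).  For
  each accuracy level the set of good t is open and, by the above, dense in the space
  nat \<Rightarrow> real, so the Baire category theorem yields a single t that is good at every level.\<close>

lemma covering_number_separated_subset:
  fixes E :: "'a::metric_space set"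
  assumes "0 \<le> r" and "k \<le> covering_number E r"
  shows "\<exists>S. S \<subseteq> E \<and> finite S \<and> card S = k \<and> (\<forall>a\<in>S. \<forall>b\<in>S. a \<noteq> b \<longrightarrow> r < dist a b)"
  using assms(2)
proof (induction k)
  case 0
  show ?case by (intro exI[of _ "{}"]) auto
next
  case (Suc k)
  then obtain S where S: "S \<subseteq> E" "finite S" "card S = k"
    and sep: "\<forall>a\<in>S. \<forall>b\<in>S. a \<noteq> b \<longrightarrow> r < dist a b"
    by auto
  have "\<not> E \<subseteq> (\<Union>c\<in>S. cball c r)"
  proof
    assume "E \<subseteq> (\<Union>c\<in>S. cball c r)"
    then have "covering_number E r \<le> k"
      unfolding covering_number_def using S by (intro Least_le) blast
    then show False using Suc.prems by simp
  qed
  then obtain e where e: "e \<in> E" "\<forall>c\<in>S. r < dist c e" by (force simp: not_le)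
  then have "e \<notin> S" using assms(1) by force
  then show ?case
    using S sep e by (intro exI[of _ "insert e S"]) (auto simp: dist_commute)
qed

lemma frequently_covering_number_gt:
  assumes "ereal s < upper_minkowski_dim E"
  shows "\<exists>\<^sub>F r in at_right 0. (1/r) powr s < real (covering_number E r)"
proof -
  define f where "f r = (if covering_number E r = 0 then -\<infinity>
      else ereal (ln (real (covering_number E r)) / ln (1 / r)))" for r :: real
  have "\<exists>\<^sub>F r in at_right 0. ereal s < f r"
  proof (rule ccontr)
    assume "\<not> ?thesis"
    then have "eventually (\<lambda>r. f r \<le> ereal s) (at_right 0)"
      by (simp add: not_frequently not_less)
    then have "Limsup (at_right 0) f \<le> ereal s" by (rule Limsup_bounded)
    then show False using assms unfolding upper_minkowski_dim_def f_def by simp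
  qed
  moreover have "eventually (\<lambda>r::real. 0 < r \<and> r < 1) (at_right 0)"
    by (simp add: eventually_at_right_field) (use zero_less_one in blast)
  ultimately show ?thesis
  proof (rule frequently_elim1[OF frequently_eventually_frequently])
    fix r assume r: "ereal s < f r \<and> 0 < r \<and> r < 1"
    then have N: "covering_number E r \<noteq> 0" and "s < ln (real (covering_number E r)) / ln (1/r)"
      unfolding f_def by (auto split: if_splits)
    then have "s * ln (1/r) < ln (real (covering_number E r))"
      using r by (simp add: pos_less_divide_eq)
    then show "(1/r) powr s < real (covering_number E r)"
      using r N by (simp add: ln_powr flip: ln_less_cancel_iff)
  qed
qed

lemma frequently_covering_number_pow_gt:
  assumes dim: "ereal s < upper_minkowski_dim E" and ns: "2 \<le> real n * s"
  shows "\<exists>\<^sub>F r in at_right 0. (1/r) ^ 2 < real (covering_number E r ^ n)"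
proof -
  have "eventually (\<lambda>r::real. 0 < r \<and> r < 1) (at_right 0)"
    by (simp add: eventually_at_right_field) (use zero_less_one in blast)
  with frequently_covering_number_gt[OF dim]
  show ?thesis
  proof (rule frequently_elim1[OF frequently_eventually_frequently])
    fix r :: real assume r: "(1/r) powr s < real (covering_number E r) \<and> 0 < r \<and> r < 1"
    have "n \<noteq> 0" using ns by (cases n) auto
    have "(1/r) ^ 2 = (1/r) powr 2" using r by (simp add: powr_realpow)
    also have "\<dots> \<le> (1/r) powr (s * real n)"
      using r ns by (intro powr_mono) (auto simp: field_simps)
    also have "\<dots> = ((1/r) powr s) ^ n"
      using r by (simp add: powr_powr powr_realpow flip: powr_realpow[of "(1/r) powr s"])
    also have "\<dots> < real (covering_number E r) ^ n"
      using r \<open>n \<noteq> 0\<close> by (intro power_strict_mono) auto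
    finally show "(1/r) ^ 2 < real (covering_number E r ^ n)" by simp
  qed
qed

lemma exists_separated_subset_pow_gt:
  assumes dim: "ereal s < upper_minkowski_dim E" and ns: "2 \<le> real n * s" and b: "0 < b"
  shows "\<exists>r P. 0 < r \<and> r < b \<and> P \<subseteq> E \<and> finite P \<and>
    (\<forall>a\<in>P. \<forall>c\<in>P. a \<noteq> c \<longrightarrow> r < dist a c) \<and> (1/r) ^ 2 < real (card P ^ n)"
proof -
  have "eventually (\<lambda>r::real. 0 < r \<and> r < b) (at_right 0)"
    using b by (simp add: eventually_at_right_field) blast
  from frequently_ex[OF frequently_eventually_frequently[OF
        frequently_covering_number_pow_gt[OF dim ns] this]]
  obtain r where r: "0 < r" "r < b" and "(1/r) ^ 2 < real (covering_number E r ^ n)"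
    by blast
  moreover obtain P where "P \<subseteq> E" "finite P" "card P = covering_number E r"
    "\<forall>a\<in>P. \<forall>c\<in>P. a \<noteq> c \<longrightarrow> r < dist a c"
    using covering_number_separated_subset[of r "covering_number E r" E] r by auto
  ultimately show ?thesis by metis
qed

definition lin_form :: "nat \<Rightarrow> (nat \<Rightarrow> real) \<Rightarrow> (nat \<Rightarrow> real) \<Rightarrow> real" where
  "lin_form n t x = (\<Sum>i<n. t i * x i)"

definition grid_perturb :: "nat \<Rightarrow> (nat \<Rightarrow> real) \<Rightarrow> real \<Rightarrow> (nat \<Rightarrow> nat) \<Rightarrow> nat \<Rightarrow> real" where
  "grid_perturb n t0 h k i = (if i < n then t0 i + h * real (k i) else t0 i)"

lemma lin_image_power_eq: "lin_image_power t n E = lin_form n t ` {x. \<forall>i<n. x i \<in> E}"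
  unfolding lin_image_power_def lin_form_def by auto

lemma lin_form_diff: "lin_form n t x - lin_form n t y = lin_form n t (x - y)"
  by (simp add: lin_form_def sum_subtractf algebra_simps)

lemma lin_form_grid_perturb:
  "lin_form n (grid_perturb n t0 h k) z = lin_form n t0 z + h * (\<Sum>i<n. real (k i) * z i)"
  by (simp add: lin_form_def grid_perturb_def sum.distrib sum_distrib_left algebra_simps)

lemma abs_lin_form_le:
  assumes "\<forall>i<n. \<bar>t i - t0 i\<bar> \<le> \<delta>" and "\<forall>i<n. \<bar>x i\<bar> \<le> L"
  shows "\<bar>lin_form n t x\<bar> \<le> (\<Sum>i<n. \<bar>t0 i\<bar> + \<delta>) * L"
proof -
  have "\<bar>lin_form n t x\<bar> \<le> (\<Sum>i<n. \<bar>t i * x i\<bar>)"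
    unfolding lin_form_def by (rule sum_abs)
  also have "\<dots> = (\<Sum>i<n. \<bar>t i\<bar> * \<bar>x i\<bar>)" by (simp add: abs_mult)
  also have "\<dots> \<le> (\<Sum>i<n. (\<bar>t0 i\<bar> + \<delta>) * L)"
  proof (rule sum_mono)
    fix i assume "i \<in> {..<n}"
    then have "\<bar>t i\<bar> \<le> \<bar>t0 i\<bar> + \<delta>" "\<bar>x i\<bar> \<le> L" using assms by force+
    then show "\<bar>t i\<bar> * \<bar>x i\<bar> \<le> (\<bar>t0 i\<bar> + \<delta>) * L"
      by (intro mult_mono) auto
  qed
  finally show ?thesis by (simp add: sum_distrib_right)
qed

text \<open>Two grid points differing only in coordinate j give values of T z that differ by at least
  h |z j| > 2 \<rho>, so every grid line in direction j contains at most one point with |T z| \<le> \<rho>.\<close>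

lemma card_grid_small_values_le:
  assumes j: "j < n" and h: "0 < h" and hz: "2 * \<rho> < h * \<bar>z j\<bar>"
  shows "K * card {k \<in> PiE {..<n} (\<lambda>_. {..<K}). \<bar>lin_form n (grid_perturb n t0 h k) z\<bar> \<le> \<rho>} \<le> K ^ n"
    (is "_ * card ?S \<le> _")
proof -
  let ?g = "\<lambda>k. lin_form n (grid_perturb n t0 h k) z"
  let ?forget = "\<lambda>k. k(j := undefined)"
  have "inj_on ?forget ?S"
  proof (rule inj_onI)
    fix k k' assume S: "k \<in> ?S" "k' \<in> ?S" and eq: "?forget k = ?forget k'"
    then have off_j: "k i = k' i" if "i \<noteq> j" for i
      using that by (metis fun_upd_other)
    have "?g k - ?g k' = h * (\<Sum>i<n. (real (k i) - real (k' i)) * z i)"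
      by (simp add: lin_form_grid_perturb sum_subtractf algebra_simps flip: sum_distrib_left)
    also have "\<dots> = h * ((real (k j) - real (k' j)) * z j)"
      using j off_j by (subst sum.remove[of _ j]) auto
    finally have diff: "\<bar>?g k - ?g k'\<bar> = h * \<bar>real (k j) - real (k' j)\<bar> * \<bar>z j\<bar>"
      using h by (simp add: abs_mult)
    have "\<bar>?g k\<bar> \<le> \<rho>" "\<bar>?g k'\<bar> \<le> \<rho>" using S by simp_all
    then have "\<bar>?g k - ?g k'\<bar> \<le> 2 * \<rho>" by linarith
    have "k j = k' j"
    proof (rule ccontr)
      assume "k j \<noteq> k' j"
      then have "1 \<le> \<bar>real (k j) - real (k' j)\<bar>" by linarith
      then have "h * \<bar>z j\<bar> * 1 \<le> h * \<bar>z j\<bar> * \<bar>real (k j) - real (k' j)\<bar>"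
        using h by (intro mult_left_mono) auto
      then have "h * \<bar>z j\<bar> \<le> \<bar>?g k - ?g k'\<bar>"
        unfolding diff by (simp add: ac_simps)
      then show False using \<open>\<bar>?g k - ?g k'\<bar> \<le> 2 * \<rho>\<close> hz by linarith
    qed
    then show "k = k'" using off_j by fastforce
  qed
  moreover have "?forget ` ?S \<subseteq> PiE ({..<n} - {j}) (\<lambda>_. {..<K})"
    by (auto simp: PiE_iff extensional_def split: if_splits)
  ultimately have "card ?S \<le> card (PiE ({..<n} - {j}) (\<lambda>_. {..<K}))"
    by (intro card_inj_on_le) (auto intro: finite_PiE)
  also have "\<dots> = K ^ (n - 1)" using j by (simp add: card_PiE)
  finally have "K * card ?S \<le> K * K ^ (n - 1)" by simp
  also have "\<dots> = K ^ n" using j by (simp flip: power_Suc)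
  finally show ?thesis .
qed

text \<open>Double counting: each pair is close for at most a 1/K fraction of the grid.\<close>

lemma exists_grid_perturb_few_close_pairs:
  fixes Y :: "(nat \<Rightarrow> real) set"
  assumes Y: "finite Y"
    and sep: "\<And>x y. x \<in> Y \<Longrightarrow> y \<in> Y \<Longrightarrow> x \<noteq> y \<Longrightarrow> \<exists>j<n. r < \<bar>x j - y j\<bar>"
    and h: "0 < h" and hr: "2 * \<rho> < h * r" and K: "0 < K"
  shows "\<exists>k \<in> PiE {..<n} (\<lambda>_. {..<K}). K * card {(x, y) \<in> Y \<times> Y. x \<noteq> y \<and>
           \<bar>lin_form n (grid_perturb n t0 h k) (x - y)\<bar> \<le> \<rho>} \<le> card Y ^ 2"
proof -
  define Gr where "Gr = PiE {..<n} (\<lambda>_::nat. {..<K})"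
  define Off where "Off = {(x, y) \<in> Y \<times> Y. x \<noteq> y}"
  define close where "close k p \<longleftrightarrow> \<bar>lin_form n (grid_perturb n t0 h k) (fst p - snd p)\<bar> \<le> \<rho>" for k p
  have Gr: "finite Gr" "card Gr = K ^ n" unfolding Gr_def by (auto simp: card_PiE intro: finite_PiE)
  have "Off \<subseteq> Y \<times> Y" unfolding Off_def by auto
  then have Off: "finite Off" "card Off \<le> card Y ^ 2"
    using Y card_mono[of "Y \<times> Y" Off] finite_subset[of Off "Y \<times> Y"]
    by (auto simp: card_cartesian_product power2_eq_square)
  have "(\<Sum>k\<in>Gr. K * card {p \<in> Off. close k p}) = (\<Sum>p\<in>Off. K * card {k \<in> Gr. close k p})"
    using sum.swap_restrict[OF Gr(1) Off(1), of "\<lambda>_ _. K" close] by (simp add: mult.commute)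
  also have "\<dots> \<le> (\<Sum>p\<in>Off. K ^ n)"
  proof (rule sum_mono)
    fix p assume "p \<in> Off"
    then have "fst p \<in> Y" "snd p \<in> Y" "fst p \<noteq> snd p" by (auto simp: Off_def)
    then obtain j where j: "j < n" "r < \<bar>(fst p - snd p) j\<bar>" using sep by auto
    have "h * r < h * \<bar>(fst p - snd p) j\<bar>" using mult_strict_left_mono[OF j(2) h] .
    then have "2 * \<rho> < h * \<bar>(fst p - snd p) j\<bar>" using hr by linarith
    from card_grid_small_values_le[where z = "fst p - snd p", OF j(1) h this, of K t0]
    show "K * card {k \<in> Gr. close k p} \<le> K ^ n"
      unfolding Gr_def close_def .
  qed
  also have "\<dots> \<le> card Gr * card Y ^ 2" using Off Gr by simp
  finally have avg: "(\<Sum>k\<in>Gr. K * card {p \<in> Off. close k p}) \<le> (\<Sum>k\<in>Gr. card Y ^ 2)" by simp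
  have "Gr \<noteq> {}" using Gr K by auto
  then obtain k where k: "k \<in> Gr" "K * card {p \<in> Off. close k p} \<le> card Y ^ 2"
    using sum_strict_mono[OF Gr(1), of "\<lambda>_. card Y ^ 2" "\<lambda>k. K * card {p \<in> Off. close k p}"] avg
    by (meson not_le)
  have "{p \<in> Off. close k p} = {(x, y) \<in> Y \<times> Y. x \<noteq> y \<and>
           \<bar>lin_form n (grid_perturb n t0 h k) (x - y)\<bar> \<le> \<rho>}"
    by (auto simp: Off_def close_def)
  then show ?thesis using k unfolding Gr_def by auto
qed

lemma exists_large_subset_avoiding_pairs:
  assumes Y: "finite Y" and B: "B \<subseteq> Y \<times> Y" and few: "4 * card B \<le> card Y"
  shows "\<exists>X \<subseteq> Y. 3 * card Y \<le> 4 * card X \<and> (\<forall>x\<in>X. \<forall>y\<in>X. (x, y) \<notin> B)"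
proof (intro exI conjI)
  have "finite B" using B Y finite_subset by blast
  then have "card (fst ` B) \<le> card B" "card Y - card (fst ` B) \<le> card (Y - fst ` B)"
    by (simp_all add: card_image_le diff_card_le_card_Diff)
  then show "3 * card Y \<le> 4 * card (Y - fst ` B)" using few by linarith
  show "\<forall>x\<in>Y - fst ` B. \<forall>y\<in>Y - fst ` B. (x, y) \<notin> B" by force
qed blast

lemma exists_perturbation_separating_most:
  fixes Y :: "(nat \<Rightarrow> real) set"
  assumes Y: "finite Y"
    and sep: "\<And>x y. x \<in> Y \<Longrightarrow> y \<in> Y \<Longrightarrow> x \<noteq> y \<Longrightarrow> \<exists>j<n. r < \<bar>x j - y j\<bar>"
    and \<delta>: "0 < \<delta>" and \<rho>: "8 * real (card Y) * \<rho> < \<delta> * r"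
  shows "\<exists>t. (\<forall>i<n. \<bar>t i - t0 i\<bar> \<le> \<delta>) \<and> (\<forall>i. n \<le> i \<longrightarrow> t i = t0 i) \<and>
    (\<exists>X \<subseteq> Y. 3 * card Y \<le> 4 * card X \<and>
      (\<forall>x\<in>X. \<forall>y\<in>X. x \<noteq> y \<longrightarrow> \<rho> < \<bar>lin_form n t x - lin_form n t y\<bar>))"
proof (cases "Y = {}")
  case True
  then show ?thesis using \<delta> by (intro exI[of _ t0]) auto
next
  case False
  define N where "N = card Y"
  define K where "K = 4 * N"
  define h where "h = \<delta> / K"
  have N: "0 < N" using Y False by (simp add: N_def card_gt_0_iff)
  then have h: "0 < h" and K: "0 < K" using \<delta> by (simp_all add: h_def K_def)
  have "2 * \<rho> < h * r"
    using \<rho> N by (simp add: h_def K_def N_def field_simps)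
  obtain k where k: "k \<in> PiE {..<n} (\<lambda>_. {..<K})"
    and few: "K * card {(x, y) \<in> Y \<times> Y. x \<noteq> y \<and>
                \<bar>lin_form n (grid_perturb n t0 h k) (x - y)\<bar> \<le> \<rho>} \<le> N ^ 2"
      (is "_ * card ?B \<le> _")
    using exists_grid_perturb_few_close_pairs[OF Y sep h \<open>2 * \<rho> < h * r\<close> K, of t0]
    unfolding N_def by blast
  define t where "t = grid_perturb n t0 h k"
  have "4 * card ?B \<le> card Y"
    using few N by (simp add: K_def N_def power2_eq_square)
  then obtain X where "X \<subseteq> Y" "3 * card Y \<le> 4 * card X" and "\<forall>x\<in>X. \<forall>y\<in>X. (x, y) \<notin> ?B"
    using exists_large_subset_avoiding_pairs[OF Y, of ?B] by auto
  then have "\<exists>X \<subseteq> Y. 3 * card Y \<le> 4 * card X \<and>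
      (\<forall>x\<in>X. \<forall>y\<in>X. x \<noteq> y \<longrightarrow> \<rho> < \<bar>lin_form n t x - lin_form n t y\<bar>)"
    by (intro exI[of _ X]) (auto simp: t_def lin_form_diff not_le)
  moreover have "\<bar>t i - t0 i\<bar> \<le> \<delta>" if "i < n" for i
  proof -
    have "k i < K" using k that by (auto simp: PiE_iff)
    then have "real (k i) \<le> real K - 1" by linarith
    then have "h * real (k i) \<le> \<delta>"
      using h N by (simp add: h_def K_def field_simps)
    then show ?thesis using that h by (simp add: t_def grid_perturb_def)
  qed
  ultimately show ?thesis
    by (intro exI[of _ t] conjI) (auto simp: t_def grid_perturb_def)
qed

lemma PiE_pairwise_separated:
  assumes "\<forall>a\<in>P. \<forall>b\<in>P. a \<noteq> b \<longrightarrow> r < dist a b"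
    and "x \<in> PiE {..<n} (\<lambda>_. P)" "y \<in> PiE {..<n} (\<lambda>_. P)" "x \<noteq> y"
  shows "\<exists>j<n. r < \<bar>x j - y j\<bar>"
proof -
  have "\<exists>j<n. x j \<noteq> y j"
  proof (rule ccontr)
    assume "\<not> ?thesis"
    then have "x = y" using PiE_ext[OF assms(2,3)] by auto
    then show False using assms(4) by simp
  qed
  then obtain j where "j < n" "x j \<noteq> y j" by blast
  moreover have "x j \<in> P" "y j \<in> P" using PiE_mem[OF assms(2)] PiE_mem[OF assms(3)] \<open>j < n\<close> by auto
  ultimately show ?thesis using assms(1) by (auto simp: dist_real_def)
qed

lemma exists_perturbation_separating_power:
  assumes P: "finite P" and P_sep: "\<forall>a\<in>P. \<forall>b\<in>P. a \<noteq> b \<longrightarrow> r < dist a b"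
    and \<delta>: "0 < \<delta>" and r: "0 < r"
  shows "\<exists>t. (\<forall>i<n. \<bar>t i - t0 i\<bar> \<le> \<delta>) \<and> (\<forall>i. n \<le> i \<longrightarrow> t i = t0 i) \<and>
    (\<exists>X \<subseteq> PiE {..<n} (\<lambda>_. P). 3 * card P ^ n \<le> 4 * card X \<and>
      (\<forall>x\<in>X. \<forall>y\<in>X. x \<noteq> y \<longrightarrow>
        \<delta> * r / (16 * card P ^ n) < \<bar>lin_form n t x - lin_form n t y\<bar>))"
proof -
  define Y where "Y = PiE {..<n} (\<lambda>_. P)"
  have Y: "finite Y" "card Y = card P ^ n" using P by (simp_all add: Y_def card_PiE finite_PiE)
  have "8 * real (card Y) * (\<delta> * r / (16 * card P ^ n)) < \<delta> * r"
    using \<delta> r by (cases "card P ^ n = 0") (simp_all add: Y(2))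
  from exists_perturbation_separating_most[OF Y(1) _ \<delta> this, of n t0]
  show ?thesis using PiE_pairwise_separated[OF P_sep] unfolding Y_def Y(2)[unfolded Y_def] by blast
qed

lemma exists_close_values:
  fixes \<phi> :: "'a \<Rightarrow> real"
  assumes bound: "\<forall>p\<in>S. \<bar>\<phi> p\<bar> \<le> B" and B: "0 \<le> B" and h: "0 < h"
    and many: "2 * B / h + 2 < real (card S)"
  shows "\<exists>p\<in>S. \<exists>q\<in>S. p \<noteq> q \<and> \<bar>\<phi> p - \<phi> q\<bar> < h"
proof -
  define idx where "idx p = \<lfloor>\<phi> p / h\<rfloor>" for p
  have range: "idx ` S \<subseteq> {\<lfloor>- B / h\<rfloor>..\<lfloor>B / h\<rfloor>}"
  proof (clarsimp simp: idx_def)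
    fix p assume "p \<in> S"
    then have "- B / h \<le> \<phi> p / h" "\<phi> p / h \<le> B / h"
      using bound h by (auto simp: abs_le_iff divide_right_mono field_simps)
    then show "\<lfloor>- (B / h)\<rfloor> \<le> \<lfloor>\<phi> p / h\<rfloor> \<and> \<lfloor>\<phi> p / h\<rfloor> \<le> \<lfloor>B / h\<rfloor>"
      by (auto intro: floor_mono)
  qed
  have card_range: "real (card {\<lfloor>- B / h\<rfloor>..\<lfloor>B / h\<rfloor>}) \<le> 2 * B / h + 2"
  proof -
    have "0 \<le> B / h" using B h by simp
    then have "0 \<le> \<lfloor>B / h\<rfloor> - \<lfloor>- (B / h)\<rfloor> + 1" by linarith
    then show ?thesis by (simp add: of_nat_nat) linarith
  qed
  have "\<not> inj_on idx S"
  proof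
    assume "inj_on idx S"
    then have "card S \<le> card {\<lfloor>- B / h\<rfloor>..\<lfloor>B / h\<rfloor>}"
      using range by (intro card_inj_on_le) auto
    then show False using many card_range by linarith
  qed
  then obtain p q where "p \<in> S" "q \<in> S" "p \<noteq> q" "\<lfloor>\<phi> p / h\<rfloor> = \<lfloor>\<phi> q / h\<rfloor>"
    unfolding inj_on_def idx_def by blast
  moreover from this(4) have "\<bar>\<phi> p / h - \<phi> q / h\<bar> < 1" by linarith
  then have "\<bar>\<phi> p - \<phi> q\<bar> < h" using h by (simp add: abs_divide flip: diff_divide_distrib)
  ultimately show ?thesis by blast
qed

lemma exists_pairs_near_ratio:
  fixes v :: "'a \<Rightarrow> real"
  assumes diam: "\<forall>x\<in>X. \<forall>y\<in>X. \<bar>v x - v y\<bar> \<le> l" and l: "0 \<le> l"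
    and h: "0 < h" and many: "2 * ((1 + \<bar>z\<bar>) * l) / h + 2 < real (card X) ^ 2"
  shows "\<exists>a\<in>X. \<exists>b\<in>X. \<exists>c\<in>X. \<exists>d\<in>X. (a, c) \<noteq> (b, d) \<and> \<bar>(v a - v b) - z * (v c - v d)\<bar> < h"
proof -
  have "0 \<le> 2 * ((1 + \<bar>z\<bar>) * l) / h" using l h by simp
  then have "X \<noteq> {}" using many by auto
  then obtain x0 where x0: "x0 \<in> X" by blast
  define \<phi> where "\<phi> p = (v (fst p) - v x0) - z * (v (snd p) - v x0)" for p
  have bound: "\<forall>p\<in>X \<times> X. \<bar>\<phi> p\<bar> \<le> (1 + \<bar>z\<bar>) * l"
  proof
    fix p assume "p \<in> X \<times> X"
    then have "\<bar>v (fst p) - v x0\<bar> \<le> l" "\<bar>v (snd p) - v x0\<bar> \<le> l"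
      using diam x0 by auto
    then have "\<bar>z * (v (snd p) - v x0)\<bar> \<le> \<bar>z\<bar> * l"
      by (simp add: abs_mult mult_left_mono)
    then show "\<bar>\<phi> p\<bar> \<le> (1 + \<bar>z\<bar>) * l"
      using \<open>\<bar>v (fst p) - v x0\<bar> \<le> l\<close> unfolding \<phi>_def by (simp add: algebra_simps)
  qed
  have "0 \<le> (1 + \<bar>z\<bar>) * l" using l by simp
  moreover have "2 * ((1 + \<bar>z\<bar>) * l) / h + 2 < real (card (X \<times> X))"
    using many by (simp add: card_cartesian_product power2_eq_square)
  ultimately obtain p q where pq: "p \<in> X \<times> X" "q \<in> X \<times> X" "p \<noteq> q" "\<bar>\<phi> p - \<phi> q\<bar> < h"
    using exists_close_values[OF bound _ h] by blast
  obtain a c b d where p: "p = (a, c)" and q: "q = (b, d)" by (cases p, cases q)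
  have "\<bar>(v a - v b) - z * (v c - v d)\<bar> < h"
    using pq(4) by (simp add: \<phi>_def p q algebra_simps)
  then show ?thesis using pq(1-3) unfolding p q by blast
qed

lemma abs_divide_sub_less:
  fixes \<alpha> \<beta> z :: real
  assumes "\<bar>\<alpha> - z * \<beta>\<bar> < h" and "\<rho> < \<bar>\<beta>\<bar>" and "0 < \<rho>"
  shows "\<bar>\<alpha> / \<beta> - z\<bar> < h / \<rho>"
proof -
  have "\<bar>\<alpha> / \<beta> - z\<bar> = \<bar>\<alpha> - z * \<beta>\<bar> / \<bar>\<beta>\<bar>"
    using assms(2,3) by (simp add: field_simps flip: abs_divide)
  also have "\<dots> < h / \<bar>\<beta>\<bar>" using assms by (simp add: divide_strict_right_mono)
  also have "\<dots> \<le> h / \<rho>" using assms by (intro divide_left_mono) auto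
  finally show ?thesis .
qed

text \<open>The ordered pairs of X outnumber m l / \<rho>; pigeonholing them yields quotients of
  differences within O(1/m) of any bounded target.\<close>

definition spread_config :: "('a \<Rightarrow> real) \<Rightarrow> 'a set \<Rightarrow> real \<Rightarrow> bool" where
  "spread_config v A m \<longleftrightarrow> (\<exists>X \<rho> l. finite X \<and> X \<subseteq> A \<and> 2 \<le> card X \<and> 0 < \<rho> \<and>
     (\<forall>x\<in>X. \<forall>y\<in>X. x \<noteq> y \<longrightarrow> \<rho> < \<bar>v x - v y\<bar>) \<and> (\<forall>x\<in>X. \<forall>y\<in>X. \<bar>v x - v y\<bar> < l) \<and>
     m * l < real (card X) ^ 2 * \<rho>)"

lemma closure_quotient_set_eq_UNIV:
  assumes spread: "\<And>m. spread_config v A m"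
  shows "closure (quotient_set (v ` A)) = UNIV"
proof -
  have "\<exists>q\<in>quotient_set (v ` A). dist q z < \<epsilon>" if "0 < \<epsilon>" for z \<epsilon>
  proof -
    define e where "e = min \<epsilon> 1"
    have e: "0 < e" "e \<le> \<epsilon>" "e \<le> 1" using \<open>0 < \<epsilon>\<close> by (auto simp: e_def)
    define m where "m = 4 * (1 + \<bar>z\<bar>) / e + 2"
    obtain X \<rho> l where X: "finite X" "X \<subseteq> A" "2 \<le> card X" and \<rho>: "0 < \<rho>"
      and sep: "\<forall>x\<in>X. \<forall>y\<in>X. x \<noteq> y \<longrightarrow> \<rho> < \<bar>v x - v y\<bar>"
      and diam: "\<forall>x\<in>X. \<forall>y\<in>X. \<bar>v x - v y\<bar> < l"
      and many: "m * l < real (card X) ^ 2 * \<rho>"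
      using spread[of m] unfolding spread_config_def by (elim exE conjE) (rule that)
    have "\<not> card X \<le> Suc 0" using X(3) by simp
    then obtain x0 x1 where "x0 \<in> X" "x1 \<in> X" "x0 \<noteq> x1"
      using card_le_Suc0_iff_eq[OF X(1)] by blast
    then have "\<rho> < \<bar>v x0 - v x1\<bar>" "\<bar>v x0 - v x1\<bar> < l" using sep diam by auto
    then have l: "\<rho> < l" by linarith
    define h where "h = e * \<rho> / 2"
    have h: "0 < h" "h < \<rho>" "h / \<rho> < \<epsilon>" using e \<rho> by (auto simp: h_def)
    have "2 * ((1 + \<bar>z\<bar>) * l) / h + 2 = (4 * (1 + \<bar>z\<bar>) / e * l + 2 * \<rho>) / \<rho>"
      using e \<rho> by (simp add: h_def field_simps)
    also have "\<dots> < m * l / \<rho>"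
      using l \<rho> by (simp add: m_def divide_strict_right_mono algebra_simps)
    also have "\<dots> < real (card X) ^ 2"
      using many \<rho> by (simp add: pos_divide_less_eq)
    finally have many_pairs: "2 * ((1 + \<bar>z\<bar>) * l) / h + 2 < real (card X) ^ 2" .
    have diam_le: "\<forall>x\<in>X. \<forall>y\<in>X. \<bar>v x - v y\<bar> \<le> l" using diam by (auto intro: less_imp_le)
    have "0 \<le> l" using l \<rho> by linarith
    from exists_pairs_near_ratio[OF diam_le this h(1) many_pairs]
    obtain a b c d where abcd: "a \<in> X" "b \<in> X" "c \<in> X" "d \<in> X" "(a, c) \<noteq> (b, d)"
      and close: "\<bar>(v a - v b) - z * (v c - v d)\<bar> < h"
      by blast
    have "c \<noteq> d"
    proof
      assume "c = d"
      then have "\<bar>v a - v b\<bar> < \<rho>" "a \<noteq> b" using close h abcd(5) by auto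
      then show False using sep abcd by fastforce
    qed
    then have cd: "\<rho> < \<bar>v c - v d\<bar>" using sep abcd by blast
    have "v a \<in> v ` A" "v b \<in> v ` A" "v c \<in> v ` A" "v d \<in> v ` A" "v c \<noteq> v d"
      using abcd X(2) cd \<rho> by auto
    then have "(v a - v b) / (v c - v d) \<in> quotient_set (v ` A)"
      unfolding quotient_set_def by blast
    moreover have "\<bar>(v a - v b) / (v c - v d) - z\<bar> < \<epsilon>"
      using abs_divide_sub_less[OF close cd \<rho>] h by linarith
    ultimately show ?thesis by (auto simp: dist_real_def)
  qed
  then show ?thesis by (auto simp: closure_approachable)
qed

lemma spread_config_mono:
  assumes "spread_config v A m'" and "m \<le> m'"
  shows "spread_config v A m"
proof -
  obtain X \<rho> l where X: "finite X" "X \<subseteq> A" "2 \<le> card X" "0 < \<rho>"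
    and sep: "\<forall>x\<in>X. \<forall>y\<in>X. x \<noteq> y \<longrightarrow> \<rho> < \<bar>v x - v y\<bar>"
    and diam: "\<forall>x\<in>X. \<forall>y\<in>X. \<bar>v x - v y\<bar> < l"
    and many: "m' * l < real (card X) ^ 2 * \<rho>"
    using assms(1) unfolding spread_config_def by (elim exE conjE) (rule that)
  have "\<not> card X \<le> Suc 0" using X(3) by simp
  then obtain x y where "x \<in> X" "y \<in> X" "x \<noteq> y"
    using card_le_Suc0_iff_eq[OF X(1)] by blast
  then have "\<rho> < \<bar>v x - v y\<bar>" "\<bar>v x - v y\<bar> < l" using sep diam by auto
  then have "0 < l" using X(4) by linarith
  then have "m * l < real (card X) ^ 2 * \<rho>"
    using many assms(2) mult_right_mono[of m m' l] by linarith
  then show ?thesis unfolding spread_config_def using X sep diam by blast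
qed

lemma open_spread_config:
  fixes f :: "'b::topological_space \<Rightarrow> 'a \<Rightarrow> real"
  assumes cont: "\<And>x. continuous_on UNIV (\<lambda>t. f t x)"
  shows "open {t. spread_config (f t) A m}"
proof -
  define admissible where "admissible = {(X, \<rho>, l). finite X \<and> X \<subseteq> A \<and> 2 \<le> card X \<and> 0 < \<rho> \<and>
      m * l < real (card X) ^ 2 * \<rho>}"
  define S where "S X \<rho> l = (\<Inter>x\<in>X. \<Inter>y\<in>X.
      {t. (x \<noteq> y \<longrightarrow> \<rho> < \<bar>f t x - f t y\<bar>) \<and> \<bar>f t x - f t y\<bar> < l})" for X \<rho> l
  have pair_open: "open {t. (x \<noteq> y \<longrightarrow> \<rho> < \<bar>f t x - f t y\<bar>) \<and> \<bar>f t x - f t y\<bar> < l}" for x y \<rho> l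
  proof -
    have dist_cont: "continuous_on UNIV (\<lambda>t. \<bar>f t x - f t y\<bar>)"
      by (intro continuous_intros cont)
    have "open {t. \<rho> < \<bar>f t x - f t y\<bar>}" "open {t. \<bar>f t x - f t y\<bar> < l}"
      by (auto intro!: open_Collect_less dist_cont continuous_on_const)
    then show ?thesis by (cases "x = y") (auto simp: Collect_conj_eq)
  qed
  have "{t. spread_config (f t) A m} = (\<Union>(X, \<rho>, l) \<in> admissible. S X \<rho> l)"
  proof (intro equalityI subsetI)
    fix t assume "t \<in> {t. spread_config (f t) A m}"
    then obtain X \<rho> l where "(X, \<rho>, l) \<in> admissible" "t \<in> S X \<rho> l"
      unfolding spread_config_def admissible_def S_def by auto
    then show "t \<in> (\<Union>(X, \<rho>, l) \<in> admissible. S X \<rho> l)" by blast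
  next
    fix t assume "t \<in> (\<Union>(X, \<rho>, l) \<in> admissible. S X \<rho> l)"
    then obtain X \<rho> l where "(X, \<rho>, l) \<in> admissible" "t \<in> S X \<rho> l" by blast
    then show "t \<in> {t. spread_config (f t) A m}"
      unfolding spread_config_def admissible_def S_def by blast
  qed
  moreover have "open (S X \<rho> l)" if "(X, \<rho>, l) \<in> admissible" for X \<rho> l
    using that pair_open unfolding S_def admissible_def by (intro open_INT) auto
  ultimately show ?thesis by (auto intro: open_UN)
qed

lemma card_sq_mul_separation_gt:
  assumes X: "3 * N \<le> 4 * card X" and N: "(1/r) ^ 2 < real N" and r: "0 < r" and \<delta>: "0 < \<delta>"
  shows "9 * \<delta> / (256 * r) < real (card X) ^ 2 * (\<delta> * r / (16 * N))"
proof -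
  have "0 < real N" using N zero_le_power2[of "1/r"] by linarith
  have "9 * \<delta> / (256 * r) < 9 * \<delta> * (real N * r) / 256"
    using N r \<delta> by (simp add: field_simps power2_eq_square)
  also have "\<dots> = (3/4 * real N) ^ 2 * (\<delta> * r / (16 * N))"
    using \<open>0 < real N\<close> by (simp add: field_simps power2_eq_square)
  also have "\<dots> \<le> real (card X) ^ 2 * (\<delta> * r / (16 * N))"
    using X r \<delta> by (intro mult_right_mono power_mono) auto
  finally show ?thesis .
qed

lemma exists_spread_config_nearby:
  fixes E :: "real set"
  assumes E: "bounded E" and dim: "ereal s < upper_minkowski_dim E" and ns: "2 \<le> real n * s"
    and \<delta>: "0 < \<delta>"
  shows "\<exists>t. (\<forall>i<n. \<bar>t i - t0 i\<bar> \<le> \<delta>) \<and> (\<forall>i. n \<le> i \<longrightarrow> t i = t0 i) \<and>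
    spread_config (lin_form n t) {x. \<forall>i<n. x i \<in> E} m"
proof -
  obtain L where "0 < L" and L: "\<forall>x\<in>E. \<bar>x\<bar> \<le> L" using E unfolding bounded_pos real_norm_def by blast
  define C where "C = (\<Sum>i<n. \<bar>t0 i\<bar> + \<delta>) * L"
  define l where "l = 2 * C + 1"
  have "0 \<le> (\<Sum>i<n. \<bar>t0 i\<bar> + \<delta>)" using \<delta> by (intro sum_nonneg) auto
  then have "0 \<le> C" unfolding C_def using \<open>0 < L\<close> by simp
  then have l: "0 < l" unfolding l_def by simp
  txt \<open>At scale r the configuration has |X|^2 \<rho> \<ge> 9 \<delta> / (256 r), which beats m l once r < b.\<close>
  define b where "b = min (1/2) (9 * \<delta> / (256 * (\<bar>m\<bar> * l + 1)))"
  have "0 < b" using \<delta> l by (simp add: b_def add_nonneg_pos)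
  then obtain r P where r: "0 < r" "r < b" and P: "P \<subseteq> E" "finite P"
    and P_sep: "\<forall>a\<in>P. \<forall>b\<in>P. a \<noteq> b \<longrightarrow> r < dist a b"
    and N_gt: "(1/r) ^ 2 < real (card P ^ n)"
    using exists_separated_subset_pow_gt[OF dim ns] by blast
  define N where "N = card P ^ n"
  define \<rho> where "\<rho> = \<delta> * r / (16 * N)"
  have "2 < 1/r" using r by (simp add: b_def field_simps)
  then have "4 < (1/r) ^ 2" using power_strict_mono[of 2 "1/r" 2] by simp
  then have N4: "4 \<le> N" using N_gt N_def by linarith
  then have \<rho>: "0 < \<rho>" using \<delta> r by (simp add: \<rho>_def)
  obtain t where t: "\<forall>i<n. \<bar>t i - t0 i\<bar> \<le> \<delta>" "\<forall>i. n \<le> i \<longrightarrow> t i = t0 i"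
    and "\<exists>X \<subseteq> PiE {..<n} (\<lambda>_. P). 3 * N \<le> 4 * card X \<and>
      (\<forall>x\<in>X. \<forall>y\<in>X. x \<noteq> y \<longrightarrow> \<rho> < \<bar>lin_form n t x - lin_form n t y\<bar>)"
    using exists_perturbation_separating_power[OF P(2) P_sep \<delta> r(1), of n t0]
    unfolding N_def \<rho>_def by blast
  then obtain X where X: "X \<subseteq> PiE {..<n} (\<lambda>_. P)" "3 * N \<le> 4 * card X"
    and X_sep: "\<forall>x\<in>X. \<forall>y\<in>X. x \<noteq> y \<longrightarrow> \<rho> < \<bar>lin_form n t x - lin_form n t y\<bar>"
    by blast
  have XE: "X \<subseteq> {x. \<forall>i<n. x i \<in> E}" using X(1) P(1) by (auto simp: PiE_iff)
  have "\<bar>lin_form n t x\<bar> \<le> C" if "x \<in> X" for x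
    using abs_lin_form_le[OF t(1)] that XE L unfolding C_def by blast
  then have "\<bar>lin_form n t x - lin_form n t y\<bar> < l" if "x \<in> X" "y \<in> X" for x y
    using that unfolding l_def by (smt (verit))
  moreover have "m * l < real (card X) ^ 2 * \<rho>"
  proof -
    have "r * (256 * (\<bar>m\<bar> * l + 1)) < 9 * \<delta>"
      using r l by (simp add: b_def pos_less_divide_eq add_nonneg_pos)
    then have "\<bar>m\<bar> * l < 9 * \<delta> / (256 * r)" using r by (simp add: field_simps)
    moreover have "m * l \<le> \<bar>m\<bar> * l" using l by (simp add: mult_right_mono)
    moreover have "9 * \<delta> / (256 * r) < real (card X) ^ 2 * \<rho>"
      unfolding \<rho>_def using card_sq_mul_separation_gt[OF X(2) _ r(1) \<delta>] N_gt N_def by simp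
    ultimately show ?thesis by linarith
  qed
  moreover have "finite X" "2 \<le> card X"
    using X N4 P(2) finite_subset[OF X(1)] by (auto intro: finite_PiE)
  ultimately show ?thesis
    unfolding spread_config_def using t XE X_sep \<rho>(1) by blast
qed

lemma dist_fun_le_uniform:
  fixes x y :: "'a::countable \<Rightarrow> 'b::metric_space"
  assumes "\<And>i. dist (x i) (y i) \<le> d"
  shows "dist x y \<le> 2 * d"
proof (rule field_le_epsilon)
  fix e :: real assume "0 < e"
  obtain N where N: "(1/2::real) ^ N < e" using real_arch_pow_inv[OF \<open>0 < e\<close>, of "1/2"] by auto
  have "Max {dist (x (from_nat n)) (y (from_nat n)) |n. n \<le> N} \<le> d"
    using assms by (subst Max_le_iff) auto
  then show "dist x y \<le> 2 * d + e"
    using dist_fun_le_dist_first_terms[of x y N] N by linarith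
qed

lemma Inter_open_dense_nonempty:
  fixes G :: "nat \<Rightarrow> 'a::complete_space set"
  assumes "\<And>m. open (G m)" and "\<And>m. closure (G m) = UNIV"
  shows "(\<Inter>m. G m) \<noteq> {}"
proof -
  have "euclidean closure_of (\<Inter>(range G)) = topspace euclidean"
    by (rule Baire_category) (auto simp: completely_metrizable_space_euclidean assms)
  then have "closure (\<Inter>m. G m) = UNIV" by simp
  then show ?thesis by (metis closure_empty UNIV_not_empty)
qed

lemma dense_spread_config_lin_form:
  fixes E :: "real set"
  assumes E: "bounded E" and dim: "ereal s < upper_minkowski_dim E" and ns: "2 \<le> real n * s"
  shows "closure {t. spread_config (lin_form n t) {x. \<forall>i<n. x i \<in> E} m} = UNIV"
proof -
  have "\<exists>t\<in>{t. spread_config (lin_form n t) {x. \<forall>i<n. x i \<in> E} m}. dist t t0 < e"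
    if "0 < e" for t0 e
  proof -
    obtain t where t: "\<forall>i<n. \<bar>t i - t0 i\<bar> \<le> e/4" "\<forall>i. n \<le> i \<longrightarrow> t i = t0 i"
      and spread: "spread_config (lin_form n t) {x. \<forall>i<n. x i \<in> E} m"
      using exists_spread_config_nearby[OF E dim ns, of "e/4" t0 m] \<open>0 < e\<close> by auto
    have "dist (t i) (t0 i) \<le> e/4" for i
      using t \<open>0 < e\<close> by (cases "i < n") (auto simp: dist_real_def)
    then have "dist t t0 \<le> 2 * (e/4)" by (rule dist_fun_le_uniform)
    then show ?thesis using spread \<open>0 < e\<close> by auto
  qed
  then show ?thesis by (auto simp: closure_approachable)
qed

theorem mainTheorem2:
  fixes E :: "real set"
  assumes "bounded E"
    and "upper_minkowski_dim E > 0"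
  shows "\<exists>(n::nat) (t::nat \<Rightarrow> real). closure (quotient_set (lin_image_power t n E)) = UNIV"
proof -
  obtain s where "0 < ereal s" and dim: "ereal s < upper_minkowski_dim E"
    using ereal_dense2[OF assms(2)] by blast
  define n where "n = nat \<lceil>2 / s\<rceil>"
  have "2 / s \<le> real n" unfolding n_def by linarith
  then have ns: "2 \<le> real n * s" using \<open>0 < ereal s\<close> by (simp add: field_simps)
  define G where "G m = {t. spread_config (lin_form n t) {x. \<forall>i<n. x i \<in> E} (real m)}" for m
  have "open (G m)" for m
    unfolding G_def lin_form_def by (intro open_spread_config continuous_intros) auto
  moreover have "closure (G m) = UNIV" for m
    unfolding G_def using dense_spread_config_lin_form[OF assms(1) dim ns] .
  ultimately have "(\<Inter>m. G m) \<noteq> {}" by (rule Inter_open_dense_nonempty)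
  then obtain t where "\<And>m. t \<in> G m" by blast
  then have "spread_config (lin_form n t) {x. \<forall>i<n. x i \<in> E} m" for m
    using spread_config_mono[OF _ real_nat_ceiling_ge] unfolding G_def by blast
  then have "closure (quotient_set (lin_image_power t n E)) = UNIV"
    unfolding lin_image_power_eq by (rule closure_quotient_set_eq_UNIV)
  then show ?thesis by blast
qed

end
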